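(* Let $R$ be a left PBW ring over the skew field $\mathbb D$ in $x_1,\dots,x_n$ with respect to an admissible ordering $\preceq$. Then the standard monomials $\{\mathbf x^{\alpha}:\alpha\in\mathbb N^n\}$ also form a basis of $R$ as a right $\mathbb D$-vector space (i.e. $R$ is a PBW ring) if and only if for each $i=1,\dots,n$ the map $(-)^{\epsilon_i}:\mathbb D\to\mathbb D$ is an automorphism of $\mathbb D$.
   Context: Let $R$ be a ring containing a skew field $\mathbb D$ and elements $x_1,\dots,x_n$; write $\mathbf x^\alpha=x_1^{\alpha_1}\cdots x_n^{\alpha_n}$ for $\alpha\in\mathbb N^n$. $R$ is left polynomial over $\mathbb D$ in $x_1,\dots,x_n$ if $\{\mathbf x^\alpha\}$ is a basis of $R$ as a left $\mathbb D$-vector space, so each $f$ has a unique standard representation $f=\sum c_\alpha\mathbf x^\alpha$; $\mathcal N(f)=\{\alpha:c_\alpha\ne0\}$. A total order $\preceq$ on $\mathbb N^n$ is admissible if $0\preceq\alpha$ for all $\alpha$ and $\alpha\preceq\beta\Rightarrow\alpha+\gamma\preceq\beta+\gamma$. $\exp(f)=\max_\preceq\mathcal N(f)$ for $f\ne0$, $\exp(0)=-\infty$. $R$ is a left PBW ring with respect to $\preceq$ if it is left polynomial and $\exp(fg)=\exp(f)+\exp(g)$ for all $f,g\in R$. $\epsilon_i\in\mathbb N^n$ is the $i$-th unit vector. In a left PBW ring, for $0\ne a\in\mathbb D$, $a^{\epsilon_i}$ denotes the (nonzero) coefficient of $\mathbf x^{\epsilon_i}=x_i$ in the standard representation of $x_ia$,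 so $x_ia=a^{\epsilon_i}x_i+p$ with $\exp(p)\prec\epsilon_i$; set $0^{\epsilon_i}=0$. The map $a\mapsto a^{\epsilon_i}$ is a ring endomorphism of $\mathbb D$. *)

theory Defs
  imports Main
begin

text \<open>Exponent vectors in N^n are functions nat => nat vanishing at indices >= n;
  variables are indexed x 0, ..., x (n-1).\<close>

definition expvecs :: "nat \<Rightarrow> (nat \<Rightarrow> nat) set" where
  "expvecs n = {\<alpha>. \<forall>i\<ge>n. \<alpha> i = 0}"

definition vadd :: "(nat \<Rightarrow> nat) \<Rightarrow> (nat \<Rightarrow> nat) \<Rightarrow> (nat \<Rightarrow> nat)" where
  "vadd \<alpha> \<beta> = (\<lambda>i. \<alpha> i + \<beta> i)"

definition vzero :: "nat \<Rightarrow> nat" where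
  "vzero = (\<lambda>_. 0)"

definition unitvec :: "nat \<Rightarrow> (nat \<Rightarrow> nat)" where
  "unitvec i = (\<lambda>j. if j = i then 1 else 0)"

definition monom :: "(nat \<Rightarrow> 'a::ring_1) \<Rightarrow> nat \<Rightarrow> (nat \<Rightarrow> nat) \<Rightarrow> 'a" where
  "monom x n \<alpha> = prod_list (map (\<lambda>i. x i ^ \<alpha> i) [0..<n])"

definition division_subring :: "'a::ring_1 set \<Rightarrow> bool" where
  "division_subring D \<longleftrightarrow> 0 \<in> D \<and> 1 \<in> D \<and>
     (\<forall>a\<in>D. \<forall>b\<in>D. a + b \<in> D \<and> a - b \<in> D \<and> a * b \<in> D) \<and>
     (\<forall>a\<in>D. a \<noteq> 0 \<longrightarrow> (\<exists>b\<in>D. a * b = 1 \<and> b * a = 1))"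

definition coeff_fams :: "'a::ring_1 set \<Rightarrow> nat \<Rightarrow> ((nat \<Rightarrow> nat) \<Rightarrow> 'a) set" where
  "coeff_fams D n = {c. (\<forall>\<alpha>. c \<alpha> \<in> D) \<and> (\<forall>\<alpha>. \<alpha> \<notin> expvecs n \<longrightarrow> c \<alpha> = 0)
                       \<and> finite {\<alpha>. c \<alpha> \<noteq> 0}}"

definition lsum :: "(nat \<Rightarrow> 'a::ring_1) \<Rightarrow> nat \<Rightarrow> ((nat \<Rightarrow> nat) \<Rightarrow> 'a) \<Rightarrow> 'a" where
  "lsum x n c = (\<Sum>\<alpha>\<in>{\<alpha>. c \<alpha> \<noteq> 0}. c \<alpha> * monom x n \<alpha>)"

definition rsum :: "(nat \<Rightarrow> 'a::ring_1) \<Rightarrow> nat \<Rightarrow> ((nat \<Rightarrow> nat) \<Rightarrow> 'a) \<Rightarrow> 'a" where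
  "rsum x n c = (\<Sum>\<alpha>\<in>{\<alpha>. c \<alpha> \<noteq> 0}. monom x n \<alpha> * c \<alpha>)"

definition left_polynomial :: "'a::ring_1 set \<Rightarrow> (nat \<Rightarrow> 'a) \<Rightarrow> nat \<Rightarrow> bool" where
  "left_polynomial D x n \<longleftrightarrow> (\<forall>f. \<exists>!c. c \<in> coeff_fams D n \<and> f = lsum x n c)"

definition right_polynomial :: "'a::ring_1 set \<Rightarrow> (nat \<Rightarrow> 'a) \<Rightarrow> nat \<Rightarrow> bool" where
  "right_polynomial D x n \<longleftrightarrow> (\<forall>f. \<exists>!c. c \<in> coeff_fams D n \<and> f = rsum x n c)"

definition lcoeff :: "'a::ring_1 set \<Rightarrow> (nat \<Rightarrow> 'a) \<Rightarrow> nat \<Rightarrow> 'a \<Rightarrow> (nat \<Rightarrow> nat) \<Rightarrow> 'a" where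
  "lcoeff D x n f = (THE c. c \<in> coeff_fams D n \<and> f = lsum x n c)"

definition newton :: "'a::ring_1 set \<Rightarrow> (nat \<Rightarrow> 'a) \<Rightarrow> nat \<Rightarrow> 'a \<Rightarrow> (nat \<Rightarrow> nat) set" where
  "newton D x n f = {\<alpha>. lcoeff D x n f \<alpha> \<noteq> 0}"

definition admissible :: "nat \<Rightarrow> ((nat \<Rightarrow> nat) \<Rightarrow> (nat \<Rightarrow> nat) \<Rightarrow> bool) \<Rightarrow> bool" where
  "admissible n le \<longleftrightarrow>
     (\<forall>\<alpha>\<in>expvecs n. le \<alpha> \<alpha>) \<and>
     (\<forall>\<alpha>\<in>expvecs n. \<forall>\<beta>\<in>expvecs n. le \<alpha> \<beta> \<and> le \<beta> \<alpha> \<longrightarrow> \<alpha> = \<beta>) \<and>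
     (\<forall>\<alpha>\<in>expvecs n. \<forall>\<beta>\<in>expvecs n. \<forall>\<gamma>\<in>expvecs n. le \<alpha> \<beta> \<and> le \<beta> \<gamma> \<longrightarrow> le \<alpha> \<gamma>) \<and>
     (\<forall>\<alpha>\<in>expvecs n. \<forall>\<beta>\<in>expvecs n. le \<alpha> \<beta> \<or> le \<beta> \<alpha>) \<and>
     (\<forall>\<alpha>\<in>expvecs n. le vzero \<alpha>) \<and>
     (\<forall>\<alpha>\<in>expvecs n. \<forall>\<beta>\<in>expvecs n. \<forall>\<gamma>\<in>expvecs n.
        le \<alpha> \<beta> \<longrightarrow> le (vadd \<alpha> \<gamma>) (vadd \<beta> \<gamma>))"

text \<open>exp(f) = max of N(f) w.r.t. le (meaningful for f nonzero).\<close>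
definition lexp :: "'a::ring_1 set \<Rightarrow> (nat \<Rightarrow> 'a) \<Rightarrow> nat \<Rightarrow> ((nat \<Rightarrow> nat) \<Rightarrow> (nat \<Rightarrow> nat) \<Rightarrow> bool)
                      \<Rightarrow> 'a \<Rightarrow> (nat \<Rightarrow> nat)" where
  "lexp D x n le f = (THE \<alpha>. \<alpha> \<in> newton D x n f \<and> (\<forall>\<beta>\<in>newton D x n f. le \<beta> \<alpha>))"

text \<open>Left PBW ring. The condition exp(fg) = exp(f) + exp(g) with exp(0) = -infinity
  is trivial if f = 0 or g = 0, and for f, g nonzero it says fg is nonzero and the
  (finite) leading exponents add.\<close>
definition left_PBW :: "'a::ring_1 set \<Rightarrow> (nat \<Rightarrow> 'a) \<Rightarrow> nat \<Rightarrow>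
                         ((nat \<Rightarrow> nat) \<Rightarrow> (nat \<Rightarrow> nat) \<Rightarrow> bool) \<Rightarrow> bool" where
  "left_PBW D x n le \<longleftrightarrow> division_subring D \<and> left_polynomial D x n \<and> admissible n le \<and>
     (\<forall>f g. f \<noteq> 0 \<longrightarrow> g \<noteq> 0 \<longrightarrow>
        f * g \<noteq> 0 \<and> lexp D x n le (f * g) = vadd (lexp D x n le f) (lexp D x n le g))"

text \<open>a^{eps_i}: coefficient of x_i = x^{eps_i} in the standard representation of x_i a.\<close>
definition twist :: "'a::ring_1 set \<Rightarrow> (nat \<Rightarrow> 'a) \<Rightarrow> nat \<Rightarrow> nat \<Rightarrow> 'a \<Rightarrow> 'a" where
  "twist D x n i a = lcoeff D x n (x i * a) (unitvec i)"

definition ring_automorphism_on :: "'a::ring_1 set \<Rightarrow> ('a \<Rightarrow> 'a) \<Rightarrow> bool" where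
  "ring_automorphism_on D \<sigma> \<longleftrightarrow>
     (\<forall>a\<in>D. \<forall>b\<in>D. \<sigma> (a + b) = \<sigma> a + \<sigma> b \<and> \<sigma> (a * b) = \<sigma> a * \<sigma> b) \<and>
     \<sigma> 1 = 1 \<and> bij_betw \<sigma> D D"

end

theory Submission
  imports Defs Complex_Main
begin

text \<open>Since leading exponents add, \<open>x\<^sub>i a = a\<^bsup>\<epsilon>\<^sub>i\<^esup> x\<^sub>i\<close> up to terms below \<open>x\<^sub>i\<close>, and comparing
  leading coefficients shows that every twist \<open>a \<mapsto> a\<^bsup>\<epsilon>\<^sub>i\<^esup>\<close> is an injective ring
  endomorphism of \<open>D\<close>; so the theorem reduces to surjectivity of the twists.
  If the monomials are also a right basis, write \<open>d x\<^sub>i = \<Sum> x\<^sup>\<alpha> c\<^sub>\<alpha>\<close>: the leading term of the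
  right-hand side is \<open>x\<^sub>i c\<close>, so \<open>d = c\<^bsup>\<epsilon>\<^sub>i\<^esup>\<close>.
  Conversely, if all twists are onto, then for every monomial and every \<open>d\<close> there is \<open>c\<close> with
  \<open>d x\<^sup>\<alpha> = x\<^sup>\<alpha> c\<close> up to lower terms. An admissible order is a well-order by Dickson's lemma,
  so induction along it writes every element as a right combination \<open>\<Sum> x\<^sup>\<alpha> c\<^sub>\<alpha>\<close>; this
  representation is unique because its leading term \<open>x\<^sup>\<mu> c\<^sub>\<mu>\<close> cannot cancel.\<close>

section \<open>Dickson's lemma and admissible orders\<close>

lemma nat_seq_incseq_subseq:
  fixes s :: "nat \<Rightarrow> nat"
  shows "\<exists>r. strict_mono r \<and> incseq (\<lambda>k. s (r k))"
proof -
  obtain r where r: "strict_mono r" "monoseq (\<lambda>k. s (r k))"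
    using seq_monosub by blast
  show ?thesis
  proof (cases "incseq (\<lambda>k. s (r k))")
    case True
    with r show ?thesis by blast
  next
    case False
    then have dec: "decseq (\<lambda>k. s (r k))"
      using r(2) monoseq_iff by blast
    obtain N where N: "\<And>k. s (r N) \<le> s (r k)"
      using ex_has_least_nat[of "\<lambda>_. True" 0 "\<lambda>k. s (r k)"] by auto
    have "s (r (k + N)) = s (r N)" for k
      using N[of "k + N"] dec by (simp add: decseq_def antisym)
    then have "incseq (\<lambda>k. s (r (k + N)))"
      by (simp add: incseq_def)
    moreover have "strict_mono (\<lambda>k. r (k + N))"
      using r(1) by (simp add: strict_mono_def)
    ultimately show ?thesis by blast
  qed
qed

lemma dickson_subseq:
  fixes s :: "nat \<Rightarrow> nat \<Rightarrow> nat"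
  shows "\<exists>r. strict_mono r \<and> (\<forall>i<m. incseq (\<lambda>k. s (r k) i))"
proof (induction m)
  case 0
  have "strict_mono (\<lambda>k::nat. k)" by (simp add: strict_mono_def)
  then show ?case by blast
next
  case (Suc m)
  then obtain r where r: "strict_mono r" "\<forall>i<m. incseq (\<lambda>k. s (r k) i)"
    by blast
  obtain r' where r': "strict_mono r'" "incseq (\<lambda>k. s (r (r' k)) m)"
    using nat_seq_incseq_subseq[of "\<lambda>k. s (r k) m"] by blast
  have "incseq (\<lambda>k. s (r (r' k)) i)" if "i < Suc m" for i
  proof (cases "i = m")
    case False
    with that r(2) have "incseq (\<lambda>k. s (r k) i)" by simp
    then show ?thesis
      using r'(1) by (simp add: incseq_def strict_mono_less_eq)
  qed (use r' in simp)
  moreover have "strict_mono (\<lambda>k. r (r' k))"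
    using r(1) r'(1) by (rule strict_mono_compose)
  ultimately show ?case by blast
qed

lemma dickson:
  fixes s :: "nat \<Rightarrow> nat \<Rightarrow> nat"
  shows "\<exists>k l. k < l \<and> (\<forall>i<m. s k i \<le> s l i)"
proof -
  obtain r where r: "strict_mono r" "\<forall>i<m. incseq (\<lambda>k. s (r k) i)"
    using dickson_subseq by blast
  then have "r 0 < r 1" "\<forall>i<m. s (r 0) i \<le> s (r 1) i"
    by (auto simp: strict_mono_def incseq_def)
  then show ?thesis by blast
qed

lemma trans_descending_chain:
  assumes "trans r" "\<And>k. (f (Suc k), f k) \<in> r" "k < l"
  shows "(f l, f k) \<in> r"
  using assms(3) by (induction k l rule: less_Suc_induct) (use assms(1,2) in \<open>auto dest: transD\<close>)

context
  fixes n :: nat and le :: "(nat \<Rightarrow> nat) \<Rightarrow> (nat \<Rightarrow> nat) \<Rightarrow> bool"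
  assumes adm: "admissible n le"
begin

lemma admissible_refl: "\<alpha> \<in> expvecs n \<Longrightarrow> le \<alpha> \<alpha>"
  and admissible_antisym: "\<alpha> \<in> expvecs n \<Longrightarrow> \<beta> \<in> expvecs n \<Longrightarrow> le \<alpha> \<beta> \<Longrightarrow> le \<beta> \<alpha> \<Longrightarrow> \<alpha> = \<beta>"
  and admissible_trans: "\<alpha> \<in> expvecs n \<Longrightarrow> \<beta> \<in> expvecs n \<Longrightarrow> \<gamma> \<in> expvecs n \<Longrightarrow>
    le \<alpha> \<beta> \<Longrightarrow> le \<beta> \<gamma> \<Longrightarrow> le \<alpha> \<gamma>"
  and admissible_total: "\<alpha> \<in> expvecs n \<Longrightarrow> \<beta> \<in> expvecs n \<Longrightarrow> le \<alpha> \<beta> \<or> le \<beta> \<alpha>"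
  and admissible_vzero_le: "\<alpha> \<in> expvecs n \<Longrightarrow> le vzero \<alpha>"
  and admissible_vadd_mono: "\<alpha> \<in> expvecs n \<Longrightarrow> \<beta> \<in> expvecs n \<Longrightarrow> \<gamma> \<in> expvecs n \<Longrightarrow>
    le \<alpha> \<beta> \<Longrightarrow> le (vadd \<alpha> \<gamma>) (vadd \<beta> \<gamma>)"
  using adm unfolding admissible_def by blast+

lemma admissible_pointwise_le:
  assumes "\<alpha> \<in> expvecs n" "\<beta> \<in> expvecs n" and pointwise: "\<forall>i<n. \<alpha> i \<le> \<beta> i"
  shows "le \<alpha> \<beta>"
proof -
  define \<delta> where "\<delta> = (\<lambda>i. \<beta> i - \<alpha> i)"
  have \<delta>: "\<delta> \<in> expvecs n"
    using assms(2) by (simp add: \<delta>_def expvecs_def)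
  have "le (vadd vzero \<alpha>) (vadd \<delta> \<alpha>)"
    by (rule admissible_vadd_mono) (use \<delta> assms(1) admissible_vzero_le in \<open>auto simp: expvecs_def vzero_def\<close>)
  moreover have "vadd \<delta> \<alpha> = \<beta>"
  proof
    fix i
    show "vadd \<delta> \<alpha> i = \<beta> i"
      using pointwise assms(1,2) by (cases "i < n") (auto simp: vadd_def \<delta>_def expvecs_def)
  qed
  ultimately show ?thesis
    by (simp add: vadd_def vzero_def)
qed

lemma admissible_finite_has_max:
  "finite S \<Longrightarrow> S \<noteq> {} \<Longrightarrow> S \<subseteq> expvecs n \<Longrightarrow> \<exists>\<mu>\<in>S. \<forall>\<beta>\<in>S. le \<beta> \<mu>"
proof (induction S rule: finite_ne_induct)
  case (singleton \<alpha>)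
  then show ?case using admissible_refl by auto
next
  case (insert \<alpha> S)
  then obtain \<mu> where \<mu>: "\<mu> \<in> S" "\<forall>\<beta>\<in>S. le \<beta> \<mu>" by auto
  show ?case
  proof (cases "le \<mu> \<alpha>")
    case True
    have "le \<beta> \<alpha>" if "\<beta> \<in> insert \<alpha> S" for \<beta>
    proof (cases "\<beta> = \<alpha>")
      case False
      with that \<mu> True insert.prems show ?thesis
        by (auto intro: admissible_trans[of \<beta> \<mu> \<alpha>])
    qed (use insert.prems admissible_refl in auto)
    then show ?thesis by blast
  next
    case False
    then have "le \<alpha> \<mu>"
      using \<mu>(1) insert.prems admissible_total by blast
    with \<mu> show ?thesis by blast
  qed
qed

lemma admissible_wf:
  "wf {(\<beta>, \<alpha>). \<beta> \<in> expvecs n \<and> \<alpha> \<in> expvecs n \<and> le \<beta> \<alpha> \<and> \<beta> \<noteq> \<alpha>}" (is "wf ?less")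
proof (rule ccontr)
  assume "\<not> wf ?less"
  then obtain f where chain: "\<And>k. (f (Suc k), f k) \<in> ?less"
    unfolding wf_iff_no_infinite_down_chain by blast
  obtain k l where "k < l" and pointwise: "\<forall>i<n. f k i \<le> f l i"
    using dickson by blast
  have "trans ?less"
    by (auto intro!: transI dest: admissible_trans admissible_antisym)
  then have less: "(f l, f k) \<in> ?less"
    using chain \<open>k < l\<close> by (rule trans_descending_chain)
  then have "le (f k) (f l)"
    using admissible_pointwise_le[OF _ _ pointwise] by blast
  with less show False
    using admissible_antisym by blast
qed

end

lemma monom_unitvec: "monom x m (unitvec i) = (if i < m then x i else 1)"
  unfolding monom_def by (induction m) (auto simp: unitvec_def less_Suc_eq)

lemma monom_vzero: "monom x m vzero = 1"
  unfolding monom_def by (induction m) (auto simp: vzero_def)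

lemma lsum_superset:
  "finite S \<Longrightarrow> {\<alpha>. c \<alpha> \<noteq> 0} \<subseteq> S \<Longrightarrow> lsum x n c = (\<Sum>\<alpha>\<in>S. c \<alpha> * monom x n \<alpha>)"
  unfolding lsum_def by (rule sum.mono_neutral_left) auto

lemma rsum_superset:
  "finite S \<Longrightarrow> {\<alpha>. c \<alpha> \<noteq> 0} \<subseteq> S \<Longrightarrow> rsum x n c = (\<Sum>\<alpha>\<in>S. monom x n \<alpha> * c \<alpha>)"
  unfolding rsum_def by (rule sum.mono_neutral_left) auto

context
  fixes c c' :: "(nat \<Rightarrow> nat) \<Rightarrow> 'a::ring_1"
  assumes fin: "finite {\<alpha>. c \<alpha> \<noteq> 0}" "finite {\<alpha>. c' \<alpha> \<noteq> 0}"
begin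

lemma lsum_add: "lsum x n (\<lambda>\<alpha>. c \<alpha> + c' \<alpha>) = lsum x n c + lsum x n c'"
  by (subst (1 2 3) lsum_superset[OF finite_UnI[OF fin]]) (auto simp: distrib_right sum.distrib)

lemma lsum_diff: "lsum x n (\<lambda>\<alpha>. c \<alpha> - c' \<alpha>) = lsum x n c - lsum x n c'"
  by (subst (1 2 3) lsum_superset[OF finite_UnI[OF fin]]) (auto simp: left_diff_distrib sum_subtractf)

lemma rsum_add: "rsum x n (\<lambda>\<alpha>. c \<alpha> + c' \<alpha>) = rsum x n c + rsum x n c'"
  by (subst (1 2 3) rsum_superset[OF finite_UnI[OF fin]]) (auto simp: distrib_left sum.distrib)

lemma rsum_diff: "rsum x n (\<lambda>\<alpha>. c \<alpha> - c' \<alpha>) = rsum x n c - rsum x n c'"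
  by (subst (1 2 3) rsum_superset[OF finite_UnI[OF fin]]) (auto simp: right_diff_distrib sum_subtractf)

end

lemma lsum_smult: "finite {\<alpha>. c \<alpha> \<noteq> 0} \<Longrightarrow> lsum x n (\<lambda>\<alpha>. d * c \<alpha>) = d * lsum x n c"
  by (subst (1 2) lsum_superset[of "{\<alpha>. c \<alpha> \<noteq> 0}"]) (auto simp: sum_distrib_left mult.assoc)

lemma lsum_single: "lsum x n (\<lambda>\<alpha>. if \<alpha> = \<gamma> then d else 0) = d * monom x n \<gamma>"
  by (subst lsum_superset[of "{\<gamma>}"]) auto

lemma rsum_single: "rsum x n (\<lambda>\<alpha>. if \<alpha> = \<gamma> then d else 0) = monom x n \<gamma> * d"
  by (subst rsum_superset[of "{\<gamma>}"]) auto

lemma lsum_zero: "lsum x n (\<lambda>_. 0) = 0"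
  by (simp add: lsum_def)

lemma rsum_zero: "rsum x n (\<lambda>_. 0) = 0"
  by (simp add: rsum_def)

section \<open>Left PBW rings\<close>

locale left_PBW_ring =
  fixes D :: "'a::ring_1 set" and x :: "nat \<Rightarrow> 'a" and n :: nat
    and le :: "(nat \<Rightarrow> nat) \<Rightarrow> (nat \<Rightarrow> nat) \<Rightarrow> bool"
  assumes left_PBW: "left_PBW D x n le"
    and one_neq_zero: "(1::'a) \<noteq> 0"
begin

abbreviation "CF \<equiv> coeff_fams D n"
abbreviation "E \<equiv> expvecs n"
abbreviation "lc \<equiv> lcoeff D x n"
abbreviation "mon \<equiv> monom x n"
abbreviation "lx \<equiv> lexp D x n le"
abbreviation "tw \<equiv> twist D x n"

lemma division_subring: "division_subring D"
  and left_polynomial: "left_polynomial D x n"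
  and admissible: "admissible n le"
  and lexp_mult: "f \<noteq> 0 \<Longrightarrow> g \<noteq> 0 \<Longrightarrow> f * g \<noteq> 0 \<and> lx (f * g) = vadd (lx f) (lx g)"
  using left_PBW unfolding left_PBW_def by auto

lemmas le_refl = admissible_refl[OF admissible]
  and le_antisym = admissible_antisym[OF admissible]
  and le_trans = admissible_trans[OF admissible]
  and vadd_le_mono = admissible_vadd_mono[OF admissible]

lemma zero_in_D: "0 \<in> D" and one_in_D: "1 \<in> D"
  and add_in_D: "a \<in> D \<Longrightarrow> b \<in> D \<Longrightarrow> a + b \<in> D"
  and diff_in_D: "a \<in> D \<Longrightarrow> b \<in> D \<Longrightarrow> a - b \<in> D"
  and mult_in_D: "a \<in> D \<Longrightarrow> b \<in> D \<Longrightarrow> a * b \<in> D"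
  using division_subring unfolding division_subring_def by auto

lemma vzero_in_E: "vzero \<in> E"
  by (simp add: expvecs_def vzero_def)

lemma unitvec_in_E: "i < n \<Longrightarrow> unitvec i \<in> E"
  by (simp add: expvecs_def unitvec_def)

lemma vadd_in_E: "\<alpha> \<in> E \<Longrightarrow> \<beta> \<in> E \<Longrightarrow> vadd \<alpha> \<beta> \<in> E"
  by (simp add: expvecs_def vadd_def)

lemma coeff_fams_in_D: "c \<in> CF \<Longrightarrow> c \<alpha> \<in> D"
  and coeff_fams_in_E: "c \<in> CF \<Longrightarrow> c \<alpha> \<noteq> 0 \<Longrightarrow> \<alpha> \<in> E"
  and coeff_fams_finite: "c \<in> CF \<Longrightarrow> finite {\<alpha>. c \<alpha> \<noteq> 0}"
  unfolding coeff_fams_def by auto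

lemma coeff_fams_combine:
  assumes "c \<in> CF" "c' \<in> CF" "\<And>a b. a \<in> D \<Longrightarrow> b \<in> D \<Longrightarrow> h a b \<in> D" "h 0 0 = 0"
  shows "(\<lambda>\<alpha>. h (c \<alpha>) (c' \<alpha>)) \<in> CF"
proof -
  have "{\<alpha>. h (c \<alpha>) (c' \<alpha>) \<noteq> 0} \<subseteq> {\<alpha>. c \<alpha> \<noteq> 0} \<union> {\<alpha>. c' \<alpha> \<noteq> 0}"
    using assms(4) by auto
  then have "finite {\<alpha>. h (c \<alpha>) (c' \<alpha>) \<noteq> 0}"
    using assms(1,2) coeff_fams_finite by (meson finite_UnI finite_subset)
  with assms show ?thesis
    unfolding coeff_fams_def by auto
qed

lemma coeff_fams_add: "c \<in> CF \<Longrightarrow> c' \<in> CF \<Longrightarrow> (\<lambda>\<alpha>. c \<alpha> + c' \<alpha>) \<in> CF"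
  by (rule coeff_fams_combine) (auto intro: add_in_D)

lemma coeff_fams_diff: "c \<in> CF \<Longrightarrow> c' \<in> CF \<Longrightarrow> (\<lambda>\<alpha>. c \<alpha> - c' \<alpha>) \<in> CF"
  by (rule coeff_fams_combine) (auto intro: diff_in_D)

lemma coeff_fams_smult: "c \<in> CF \<Longrightarrow> d \<in> D \<Longrightarrow> (\<lambda>\<alpha>. d * c \<alpha>) \<in> CF"
  using coeff_fams_combine[of c c "\<lambda>a _. d * a"] by (auto intro: mult_in_D)

lemma coeff_fams_single: "d \<in> D \<Longrightarrow> \<gamma> \<in> E \<Longrightarrow> (\<lambda>\<alpha>. if \<alpha> = \<gamma> then d else 0) \<in> CF"
  unfolding coeff_fams_def by (auto intro: zero_in_D finite_subset[of _ "{\<gamma>}"])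

lemma unique_lcoeffs: "\<exists>!c. c \<in> CF \<and> f = lsum x n c"
  using left_polynomial unfolding left_polynomial_def by blast

lemma lcoeff_spec: "lc f \<in> CF \<and> f = lsum x n (lc f)"
  unfolding lcoeff_def using unique_lcoeffs by (rule theI')

lemma lcoeff_unique: "c \<in> CF \<Longrightarrow> f = lsum x n c \<Longrightarrow> lc f = c"
  using unique_lcoeffs lcoeff_spec by blast

lemma lcoeff_in_D: "lc f \<alpha> \<in> D"
  and lcoeff_in_E: "lc f \<alpha> \<noteq> 0 \<Longrightarrow> \<alpha> \<in> E"
  and lcoeff_finite: "finite {\<alpha>. lc f \<alpha> \<noteq> 0}"
  using lcoeff_spec coeff_fams_in_D coeff_fams_in_E coeff_fams_finite by blast+

lemma lsum_lcoeff: "lsum x n (lc f) = f"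
  using lcoeff_spec by simp

lemma lcoeff_add: "lc (f + g) = (\<lambda>\<alpha>. lc f \<alpha> + lc g \<alpha>)"
  by (rule lcoeff_unique) (auto simp: lsum_add lcoeff_finite lsum_lcoeff lcoeff_spec coeff_fams_add)

lemma lcoeff_diff: "lc (f - g) = (\<lambda>\<alpha>. lc f \<alpha> - lc g \<alpha>)"
  by (rule lcoeff_unique) (auto simp: lsum_diff lcoeff_finite lsum_lcoeff lcoeff_spec coeff_fams_diff)

lemma lcoeff_smult: "d \<in> D \<Longrightarrow> lc (d * f) = (\<lambda>\<alpha>. d * lc f \<alpha>)"
  by (rule lcoeff_unique) (auto simp: lsum_smult lcoeff_finite lsum_lcoeff lcoeff_spec coeff_fams_smult)

lemma lcoeff_single: "d \<in> D \<Longrightarrow> \<gamma> \<in> E \<Longrightarrow> lc (d * mon \<gamma>) = (\<lambda>\<alpha>. if \<alpha> = \<gamma> then d else 0)"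
  by (rule lcoeff_unique) (auto simp: lsum_single coeff_fams_single)

lemma lcoeff_zero: "lc 0 = (\<lambda>_. 0)"
  using lcoeff_single[OF zero_in_D vzero_in_E] by simp

lemma lcoeff_monom: "\<gamma> \<in> E \<Longrightarrow> lc (mon \<gamma>) = (\<lambda>\<alpha>. if \<alpha> = \<gamma> then 1 else 0)"
  using lcoeff_single[OF one_in_D] by simp

lemma lcoeff_const: "d \<in> D \<Longrightarrow> lc d = (\<lambda>\<alpha>. if \<alpha> = vzero then d else 0)"
  using lcoeff_single[OF _ vzero_in_E] by (simp add: monom_vzero)

lemma lcoeff_eq_zero_iff: "lc f = (\<lambda>_. 0) \<longleftrightarrow> f = 0"
  using lsum_lcoeff[of f] lcoeff_zero by (auto simp: lsum_zero)

lemma lexp_spec: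
  assumes "f \<noteq> 0"
  shows "lc f (lx f) \<noteq> 0" and "lc f \<beta> \<noteq> 0 \<Longrightarrow> le \<beta> (lx f)"
proof -
  let ?N = "{\<alpha>. lc f \<alpha> \<noteq> 0}"
  have "?N \<noteq> {}"
    using assms lcoeff_eq_zero_iff by auto
  then obtain \<mu> where \<mu>: "\<mu> \<in> ?N" "\<forall>\<beta>\<in>?N. le \<beta> \<mu>"
    using admissible_finite_has_max[OF admissible lcoeff_finite] lcoeff_in_E by blast
  have "lx f = \<mu>"
    unfolding lexp_def newton_def
    by (rule the_equality) (use \<mu> le_antisym lcoeff_in_E in blast)+
  with \<mu> show "lc f (lx f) \<noteq> 0" and "lc f \<beta> \<noteq> 0 \<Longrightarrow> le \<beta> (lx f)"
    by auto
qed

lemma lexp_in_E: "f \<noteq> 0 \<Longrightarrow> lx f \<in> E"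
  using lexp_spec(1) lcoeff_in_E by blast

lemma lexp_eqI: "lc f \<gamma> \<noteq> 0 \<Longrightarrow> (\<And>\<beta>. lc f \<beta> \<noteq> 0 \<Longrightarrow> le \<beta> \<gamma>) \<Longrightarrow> lx f = \<gamma>"
  by (metis le_antisym lcoeff_in_E lcoeff_zero lexp_spec)

lemma monom_nonzero: "\<gamma> \<in> E \<Longrightarrow> mon \<gamma> \<noteq> 0"
  using lcoeff_monom[of \<gamma>] lcoeff_zero one_neq_zero by metis

lemma lexp_monom: "\<gamma> \<in> E \<Longrightarrow> lx (mon \<gamma>) = \<gamma>"
  by (rule lexp_eqI) (auto simp: lcoeff_monom one_neq_zero le_refl split: if_splits)

lemma lexp_const: "d \<in> D \<Longrightarrow> d \<noteq> 0 \<Longrightarrow> lx d = vzero"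
  by (rule lexp_eqI) (auto simp: lcoeff_const le_refl vzero_in_E split: if_splits)

lemma lexp_monom_mult_const:
  "\<gamma> \<in> E \<Longrightarrow> c \<in> D \<Longrightarrow> c \<noteq> 0 \<Longrightarrow> mon \<gamma> * c \<noteq> 0 \<and> lx (mon \<gamma> * c) = \<gamma>"
  using lexp_mult[OF monom_nonzero, of \<gamma> c] lexp_monom[of \<gamma>] lexp_const[of c]
  by (auto simp: vadd_def vzero_def)

lemma lexp_x_mult_const: "i < n \<Longrightarrow> a \<in> D \<Longrightarrow> a \<noteq> 0 \<Longrightarrow> x i * a \<noteq> 0 \<and> lx (x i * a) = unitvec i"
  using lexp_monom_mult_const[OF unitvec_in_E] by (simp add: monom_unitvec)

definition below :: "'a \<Rightarrow> (nat \<Rightarrow> nat) \<Rightarrow> bool" where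
  "below f \<gamma> \<longleftrightarrow> (\<forall>\<beta>. lc f \<beta> \<noteq> 0 \<longrightarrow> le \<beta> \<gamma> \<and> \<beta> \<noteq> \<gamma>)"

lemma below_zero: "below 0 \<gamma>"
  by (simp add: below_def lcoeff_zero)

lemma below_add: "below f \<gamma> \<Longrightarrow> below g \<gamma> \<Longrightarrow> below (f + g) \<gamma>"
  unfolding below_def lcoeff_add by (metis add.right_neutral add_0)

lemma below_sum: "finite S \<Longrightarrow> (\<And>s. s \<in> S \<Longrightarrow> below (g s) \<gamma>) \<Longrightarrow> below (\<Sum>s\<in>S. g s) \<gamma>"
  by (induction S rule: finite_induct) (auto simp: below_zero below_add)

lemma below_const_mult: "d \<in> D \<Longrightarrow> below f \<gamma> \<Longrightarrow> below (d * f) \<gamma>"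
  unfolding below_def by (simp add: lcoeff_smult) (metis mult_zero_right)

lemma below_lcoeff: "below f \<gamma> \<Longrightarrow> lc f \<gamma> = 0"
  unfolding below_def by blast

lemma below_iff_lexp:
  assumes "f \<noteq> 0" "\<gamma> \<in> E"
  shows "below f \<gamma> \<longleftrightarrow> le (lx f) \<gamma> \<and> lx f \<noteq> \<gamma>"
proof
  assume "below f \<gamma>"
  then show "le (lx f) \<gamma> \<and> lx f \<noteq> \<gamma>"
    using lexp_spec(1)[OF assms(1)] unfolding below_def by blast
next
  assume lt: "le (lx f) \<gamma> \<and> lx f \<noteq> \<gamma>"
  show "below f \<gamma>"
    unfolding below_def
  proof (intro allI impI)
    fix \<beta>
    assume \<beta>: "lc f \<beta> \<noteq> 0"
    then have "\<beta> \<in> E" "le \<beta> (lx f)"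
      using lcoeff_in_E lexp_spec(2)[OF assms(1)] by blast+
    with lt show "le \<beta> \<gamma> \<and> \<beta> \<noteq> \<gamma>"
      using le_trans le_antisym lexp_in_E[OF assms(1)] assms(2) by metis
  qed
qed

lemma below_mult_left:
  assumes u: "u \<noteq> 0" and \<gamma>: "\<gamma> \<in> E" and r: "below r \<gamma>"
  shows "below (u * r) (vadd (lx u) \<gamma>)"
proof (cases "r = 0")
  case False
  have ur: "u * r \<noteq> 0" "lx (u * r) = vadd (lx u) (lx r)"
    using lexp_mult[OF u False] by auto
  have "le (lx r) \<gamma>" "lx r \<noteq> \<gamma>"
    using below_iff_lexp[OF False \<gamma>] r by blast+
  then have "le (vadd (lx r) (lx u)) (vadd \<gamma> (lx u))" "vadd (lx u) (lx r) \<noteq> vadd (lx u) \<gamma>"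
    using vadd_le_mono lexp_in_E u False \<gamma> by (auto simp: vadd_def fun_eq_iff)
  then show ?thesis
    using below_iff_lexp[OF ur(1) vadd_in_E[OF lexp_in_E[OF u] \<gamma>]] ur(2)
    by (simp add: vadd_def add.commute)
qed (simp add: below_zero)

lemma below_mult_right:
  assumes v: "v \<noteq> 0" and \<gamma>: "\<gamma> \<in> E" and r: "below r \<gamma>"
  shows "below (r * v) (vadd \<gamma> (lx v))"
proof (cases "r = 0")
  case False
  have rv: "r * v \<noteq> 0" "lx (r * v) = vadd (lx r) (lx v)"
    using lexp_mult[OF False v] by auto
  have "le (lx r) \<gamma>" "lx r \<noteq> \<gamma>"
    using below_iff_lexp[OF False \<gamma>] r by blast+
  then have "le (vadd (lx r) (lx v)) (vadd \<gamma> (lx v))" "vadd (lx r) (lx v) \<noteq> vadd \<gamma> (lx v)"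
    using vadd_le_mono lexp_in_E v False \<gamma> by (auto simp: vadd_def fun_eq_iff)
  then show ?thesis
    using below_iff_lexp[OF rv(1) vadd_in_E[OF \<gamma> lexp_in_E[OF v]]] rv(2) by simp
qed (simp add: below_zero)

lemma below_mult_const:
  assumes "b \<in> D" "\<gamma> \<in> E" "below r \<gamma>"
  shows "below (r * b) \<gamma>"
proof (cases "b = 0")
  case False
  with assms show ?thesis
    using below_mult_right[OF False, of \<gamma> r] lexp_const by (simp add: vadd_def vzero_def)
qed (simp add: below_zero)

lemma lcoeff_eq_if_below:
  "d \<in> D \<Longrightarrow> \<gamma> \<in> E \<Longrightarrow> below (f - d * mon \<gamma>) \<gamma> \<Longrightarrow> lc f \<gamma> = d"
  using below_lcoeff[of "f - d * mon \<gamma>" \<gamma>] by (simp add: lcoeff_diff lcoeff_single)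

lemma below_diff_leading_term:
  assumes "g \<noteq> 0"
  shows "below (g - lc g (lx g) * mon (lx g)) (lx g)"
  unfolding below_def
proof (intro allI impI)
  fix \<beta>
  assume "lc (g - lc g (lx g) * mon (lx g)) \<beta> \<noteq> 0"
  then have "\<beta> \<noteq> lx g" "lc g \<beta> \<noteq> 0"
    by (auto simp: lcoeff_diff lcoeff_single[OF lcoeff_in_D lexp_in_E[OF assms]] split: if_splits)
  then show "le \<beta> (lx g) \<and> \<beta> \<noteq> lx g"
    using lexp_spec(2)[OF assms] by blast
qed

lemma twist_eq: "tw i a = lc (x i * a) (unitvec i)"
  by (simp add: twist_def)

lemma twist_in_D: "tw i a \<in> D"
  by (simp add: twist_eq lcoeff_in_D)

lemma twist_add: "tw i (a + b) = tw i a + tw i b"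
  by (simp add: twist_eq distrib_left lcoeff_add)

lemma twist_diff: "tw i (a - b) = tw i a - tw i b"
  by (simp add: twist_eq right_diff_distrib lcoeff_diff)

lemma twist_nonzero: "i < n \<Longrightarrow> a \<in> D \<Longrightarrow> a \<noteq> 0 \<Longrightarrow> tw i a \<noteq> 0"
  using lexp_spec(1)[of "x i * a"] lexp_x_mult_const[of i a] by (simp add: twist_eq)

lemma x_mult_const_below:
  assumes i: "i < n" and a: "a \<in> D"
  shows "below (x i * a - tw i a * x i) (unitvec i)"
proof (cases "a = 0")
  case False
  then have "x i * a \<noteq> 0" "lx (x i * a) = unitvec i"
    using lexp_x_mult_const[OF i a] by blast+
  then show ?thesis
    using below_diff_leading_term[of "x i * a"] i by (simp add: twist_eq monom_unitvec)
qed (simp add: below_zero twist_eq lcoeff_zero)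

lemma twist_mult:
  assumes i: "i < n" and a: "a \<in> D" and b: "b \<in> D"
  shows "tw i (a * b) = tw i a * tw i b"
proof -
  have "x i * (a * b) - (tw i a * tw i b) * mon (unitvec i) =
      tw i a * (x i * b - tw i b * x i) + (x i * a - tw i a * x i) * b"
    using i by (simp add: monom_unitvec algebra_simps)
  then have "below (x i * (a * b) - (tw i a * tw i b) * mon (unitvec i)) (unitvec i)"
    using i a b
    by (simp add: below_add below_const_mult below_mult_const x_mult_const_below twist_in_D unitvec_in_E)
  then have "lc (x i * (a * b)) (unitvec i) = tw i a * tw i b"
    by (rule lcoeff_eq_if_below[OF mult_in_D[OF twist_in_D twist_in_D] unitvec_in_E[OF i]])
  then show ?thesis
    by (simp add: twist_eq)
qed

lemma twist_one:
  assumes i: "i < n"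
  shows "tw i 1 = 1"
proof -
  have "below (x i * 1 - 1 * mon (unitvec i)) (unitvec i)"
    using i by (simp add: monom_unitvec below_zero)
  then show ?thesis
    unfolding twist_eq by (rule lcoeff_eq_if_below[OF one_in_D unitvec_in_E[OF i]])
qed

lemma twist_inj_on: "i < n \<Longrightarrow> inj_on (tw i) D"
proof (rule inj_onI)
  fix a b
  assume "i < n" "a \<in> D" "b \<in> D" "tw i a = tw i b"
  then have "tw i (a - b) = 0"
    by (simp add: twist_diff)
  with \<open>i < n\<close> \<open>a \<in> D\<close> \<open>b \<in> D\<close> show "a = b"
    using twist_nonzero[of i "a - b"] diff_in_D by auto
qed

lemma twist_automorphism_iff_surj:
  assumes "i < n"
  shows "ring_automorphism_on D (tw i) \<longleftrightarrow> tw i ` D = D"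
  unfolding ring_automorphism_on_def bij_betw_def
  by (simp add: twist_add twist_mult twist_one twist_inj_on assms)

subsection \<open>Right standard representations\<close>

lemma rsum_leading_coeff:
  assumes h: "h \<in> CF" and nonzero: "h \<noteq> (\<lambda>_. 0)"
  obtains \<mu> where "\<mu> \<in> E" "h \<mu> \<noteq> 0"
    "lc (rsum x n h) \<mu> = lc (mon \<mu> * h \<mu>) \<mu>" "lc (rsum x n h) \<mu> \<noteq> 0"
proof -
  let ?S = "{\<alpha>. h \<alpha> \<noteq> 0}"
  have fin: "finite ?S" and SE: "?S \<subseteq> E"
    using coeff_fams_finite[OF h] coeff_fams_in_E[OF h] by blast+
  moreover have "?S \<noteq> {}"
    using nonzero by auto
  ultimately obtain \<mu> where \<mu>: "\<mu> \<in> ?S" "\<forall>\<beta>\<in>?S. le \<beta> \<mu>"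
    using admissible_finite_has_max[OF admissible] by blast
  have \<mu>E: "\<mu> \<in> E"
    using \<mu>(1) SE by blast
  have lead: "mon \<mu> * h \<mu> \<noteq> 0" "lx (mon \<mu> * h \<mu>) = \<mu>"
    using lexp_monom_mult_const[OF \<mu>E coeff_fams_in_D[OF h]] \<mu>(1) by auto
  have "below (\<Sum>\<alpha>\<in>?S - {\<mu>}. mon \<alpha> * h \<alpha>) \<mu>"
  proof (rule below_sum)
    fix \<beta>
    assume \<beta>: "\<beta> \<in> ?S - {\<mu>}"
    then have "\<beta> \<in> E" "le \<beta> \<mu>"
      using SE \<mu>(2) by blast+
    moreover have "mon \<beta> * h \<beta> \<noteq> 0 \<and> lx (mon \<beta> * h \<beta>) = \<beta>"
      using lexp_monom_mult_const[OF \<open>\<beta> \<in> E\<close> coeff_fams_in_D[OF h]] \<beta> by auto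
    ultimately show "below (mon \<beta> * h \<beta>) \<mu>"
      using below_iff_lexp[OF _ \<mu>E] \<beta> by auto
  qed (use fin in simp)
  moreover have "rsum x n h = mon \<mu> * h \<mu> + (\<Sum>\<alpha>\<in>?S - {\<mu>}. mon \<alpha> * h \<alpha>)"
    unfolding rsum_def using sum.remove[OF fin \<mu>(1)] .
  ultimately have "lc (rsum x n h) \<mu> = lc (mon \<mu> * h \<mu>) \<mu>"
    by (simp add: lcoeff_add below_lcoeff)
  moreover have "lc (mon \<mu> * h \<mu>) \<mu> \<noteq> 0"
    using lexp_spec(1)[OF lead(1)] lead(2) by simp
  ultimately show ?thesis
    using that \<mu>E \<mu>(1) by simp
qed

lemma rsum_inject:
  assumes c: "c \<in> CF" "c' \<in> CF" and eq: "rsum x n c = rsum x n c'"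
  shows "c = c'"
proof (rule ccontr)
  assume "c \<noteq> c'"
  then have "(\<lambda>\<alpha>. c \<alpha> - c' \<alpha>) \<noteq> (\<lambda>_. 0)"
    by (auto simp: fun_eq_iff)
  then obtain \<mu> where "lc (rsum x n (\<lambda>\<alpha>. c \<alpha> - c' \<alpha>)) \<mu> \<noteq> 0"
    using rsum_leading_coeff[OF coeff_fams_diff[OF c]] by metis
  moreover have "rsum x n (\<lambda>\<alpha>. c \<alpha> - c' \<alpha>) = 0"
    using rsum_diff[OF coeff_fams_finite[OF c(1)] coeff_fams_finite[OF c(2)]] eq by simp
  ultimately show False
    by (simp add: lcoeff_zero)
qed

lemma twist_surj_if_right_polynomial:
  assumes rp: "right_polynomial D x n" and i: "i < n"
  shows "tw i ` D = D"
proof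
  show "tw i ` D \<subseteq> D"
    using twist_in_D by blast
  show "D \<subseteq> tw i ` D"
  proof
    fix d
    assume d: "d \<in> D"
    show "d \<in> tw i ` D"
    proof (cases "d = 0")
      case True
      then show ?thesis
        using zero_in_D by (force simp: twist_eq lcoeff_zero)
    next
      case False
      let ?e = "unitvec i"
      obtain h where h: "h \<in> CF" "d * mon ?e = rsum x n h"
        using rp unfolding right_polynomial_def by blast
      have lc_f: "lc (rsum x n h) = (\<lambda>\<alpha>. if \<alpha> = ?e then d else 0)"
        using lcoeff_single[OF d unitvec_in_E[OF i]] h(2) by simp
      have "h \<noteq> (\<lambda>_. 0)"
      proof
        assume "h = (\<lambda>_. 0)"
        then have "lc (rsum x n h) ?e = 0"
          by (simp add: rsum_zero lcoeff_zero)
        with lc_f False show False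
          by simp
      qed
      then obtain \<mu> where \<mu>: "lc (rsum x n h) \<mu> = lc (mon \<mu> * h \<mu>) \<mu>" "lc (rsum x n h) \<mu> \<noteq> 0"
        using rsum_leading_coeff[OF h(1)] by metis
      then have "\<mu> = ?e"
        using lc_f by (auto split: if_splits)
      with \<mu>(1) lc_f i have "d = tw i (h ?e)"
        by (simp add: twist_eq monom_unitvec)
      then show ?thesis
        using coeff_fams_in_D[OF h(1)] by blast
    qed
  qed
qed

definition moves_scalars_right :: "'a \<Rightarrow> bool" where
  "moves_scalars_right u \<longleftrightarrow> u \<noteq> 0 \<and> (\<forall>d\<in>D. \<exists>c\<in>D. below (u * c - d * u) (lx u))"

lemma moves_scalars_right_mult:
  assumes "moves_scalars_right u" "moves_scalars_right v"
  shows "moves_scalars_right (u * v)"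
proof -
  have u: "u \<noteq> 0" and v: "v \<noteq> 0"
    using assms by (auto simp: moves_scalars_right_def)
  have uv: "u * v \<noteq> 0" "lx (u * v) = vadd (lx u) (lx v)"
    using lexp_mult[OF u v] by auto
  have "\<exists>c\<in>D. below (u * v * c - d * (u * v)) (lx (u * v))" if d: "d \<in> D" for d
  proof -
    obtain k where k: "k \<in> D" "below (u * k - d * u) (lx u)"
      using assms(1) d unfolding moves_scalars_right_def by blast
    obtain c where c: "c \<in> D" "below (v * c - k * v) (lx v)"
      using assms(2) k(1) unfolding moves_scalars_right_def by blast
    have "u * v * c - d * (u * v) = u * (v * c - k * v) + (u * k - d * u) * v"
      by (simp add: algebra_simps)
    then have "below (u * v * c - d * (u * v)) (lx (u * v))"
      unfolding uv(2)
      by (simp add: below_add below_mult_left below_mult_right u v lexp_in_E c(2) k(2))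
    with c(1) show ?thesis
      by blast
  qed
  with uv(1) show ?thesis
    unfolding moves_scalars_right_def by blast
qed

lemma moves_scalars_right_one: "moves_scalars_right 1"
  unfolding moves_scalars_right_def
  using one_neq_zero below_zero by (metis diff_self mult_1_left mult_1_right)

lemma moves_scalars_right_power: "moves_scalars_right u \<Longrightarrow> moves_scalars_right (u ^ k)"
  by (induction k) (auto simp: moves_scalars_right_one moves_scalars_right_mult)

lemma moves_scalars_right_prod_list:
  "(\<And>u. u \<in> set us \<Longrightarrow> moves_scalars_right u) \<Longrightarrow> moves_scalars_right (prod_list us)"
  by (induction us) (auto simp: moves_scalars_right_one moves_scalars_right_mult)

lemma moves_scalars_right_x:
  assumes i: "i < n" and surj: "tw i ` D = D"
  shows "moves_scalars_right (x i)"
proof -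
  have "x i \<noteq> 0" "lx (x i) = unitvec i"
    using monom_nonzero lexp_monom unitvec_in_E[OF i] i by (metis monom_unitvec)+
  moreover have "\<exists>c\<in>D. below (x i * c - d * x i) (unitvec i)" if "d \<in> D" for d
    using that surj x_mult_const_below[OF i] by (metis imageE)
  ultimately show ?thesis
    unfolding moves_scalars_right_def by simp
qed

lemma moves_scalars_right_monom:
  assumes "\<And>i. i < n \<Longrightarrow> tw i ` D = D"
  shows "moves_scalars_right (mon \<alpha>)"
  unfolding monom_def
proof (rule moves_scalars_right_prod_list)
  fix u
  assume "u \<in> set (map (\<lambda>i. x i ^ \<alpha> i) [0..<n])"
  then obtain i where "i < n" "u = x i ^ \<alpha> i"
    by auto
  then show "moves_scalars_right u"
    using moves_scalars_right_power moves_scalars_right_x assms by blast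
qed

definition right_span :: "'a set" where
  "right_span = {rsum x n c | c. c \<in> CF}"

lemma right_span_add: "f \<in> right_span \<Longrightarrow> g \<in> right_span \<Longrightarrow> f + g \<in> right_span"
  and right_span_diff: "f \<in> right_span \<Longrightarrow> g \<in> right_span \<Longrightarrow> f - g \<in> right_span"
proof -
  assume "f \<in> right_span" "g \<in> right_span"
  then obtain c c' where c: "c \<in> CF" "c' \<in> CF" and fg: "f = rsum x n c" "g = rsum x n c'"
    unfolding right_span_def by blast
  have "f + g = rsum x n (\<lambda>\<alpha>. c \<alpha> + c' \<alpha>)" "f - g = rsum x n (\<lambda>\<alpha>. c \<alpha> - c' \<alpha>)"
    using rsum_add[OF coeff_fams_finite[OF c(1)] coeff_fams_finite[OF c(2)]]
      rsum_diff[OF coeff_fams_finite[OF c(1)] coeff_fams_finite[OF c(2)]] fg by simp_all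
  with coeff_fams_add[OF c] coeff_fams_diff[OF c]
  show "f + g \<in> right_span" "f - g \<in> right_span"
    unfolding right_span_def by blast+
qed

lemma right_span_monom_mult: "d \<in> D \<Longrightarrow> \<gamma> \<in> E \<Longrightarrow> mon \<gamma> * d \<in> right_span"
  unfolding right_span_def using rsum_single[symmetric] coeff_fams_single by blast

lemma right_span_sum:
  "finite S \<Longrightarrow> (\<And>s. s \<in> S \<Longrightarrow> g s \<in> right_span) \<Longrightarrow> (\<Sum>s\<in>S. g s) \<in> right_span"
  by (induction S rule: finite_induct)
    (auto simp: right_span_add intro: right_span_monom_mult[OF zero_in_D vzero_in_E, simplified])

lemma lsum_lcoeff_expanded: "f = (\<Sum>\<alpha>\<in>{\<alpha>. lc f \<alpha> \<noteq> 0}. lc f \<alpha> * mon \<alpha>)"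
  using lsum_lcoeff[of f] unfolding lsum_def by simp

text \<open>Induction along the well-founded order: \<open>d x\<^sup>\<alpha> = x\<^sup>\<alpha> c - g\<close> with \<open>g\<close> supported strictly
  below \<open>\<alpha>\<close>.\<close>

lemma in_right_span:
  assumes surj: "\<And>i. i < n \<Longrightarrow> tw i ` D = D"
  shows "f \<in> right_span"
proof -
  have monom: "d * mon \<alpha> \<in> right_span" if "\<alpha> \<in> E" "d \<in> D" for \<alpha> d
    using that
  proof (induction \<alpha> arbitrary: d rule: wf_induct_rule[OF admissible_wf[OF admissible], case_names less])
    case (less \<alpha>)
    have "moves_scalars_right (mon \<alpha>)"
      by (rule moves_scalars_right_monom[OF surj])
    then obtain c where c: "c \<in> D" "below (mon \<alpha> * c - d * mon \<alpha>) \<alpha>"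
      using less.prems lexp_monom unfolding moves_scalars_right_def by auto
    let ?g = "mon \<alpha> * c - d * mon \<alpha>"
    have "(\<Sum>\<beta>\<in>{\<beta>. lc ?g \<beta> \<noteq> 0}. lc ?g \<beta> * mon \<beta>) \<in> right_span"
    proof (rule right_span_sum[OF lcoeff_finite])
      fix \<beta>
      assume "\<beta> \<in> {\<beta>. lc ?g \<beta> \<noteq> 0}"
      then have "\<beta> \<in> E" "le \<beta> \<alpha>" "\<beta> \<noteq> \<alpha>"
        using c(2) lcoeff_in_E unfolding below_def by auto
      then show "lc ?g \<beta> * mon \<beta> \<in> right_span"
        using less.IH less.prems lcoeff_in_D by blast
    qed
    then have "?g \<in> right_span"
      by (simp only: lsum_lcoeff_expanded[of ?g, symmetric])
    then have "mon \<alpha> * c - ?g \<in> right_span"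
      by (rule right_span_diff[OF right_span_monom_mult[OF c(1) less.prems(1)]])
    then show ?case
      by simp
  qed
  have "(\<Sum>\<alpha>\<in>{\<alpha>. lc f \<alpha> \<noteq> 0}. lc f \<alpha> * mon \<alpha>) \<in> right_span"
    by (rule right_span_sum[OF lcoeff_finite]) (use monom lcoeff_in_E lcoeff_in_D in blast)
  then show ?thesis
    by (simp only: lsum_lcoeff_expanded[of f, symmetric])
qed

lemma right_polynomial_iff_twists_surj:
  "right_polynomial D x n \<longleftrightarrow> (\<forall>i<n. tw i ` D = D)"
proof
  assume "right_polynomial D x n"
  then show "\<forall>i<n. tw i ` D = D"
    using twist_surj_if_right_polynomial by blast
next
  assume "\<forall>i<n. tw i ` D = D"
  then have "f \<in> right_span" for f
    using in_right_span by blast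
  then show "right_polynomial D x n"
    unfolding right_polynomial_def right_span_def using rsum_inject by blast
qed

end

section \<open>The trivial ring\<close>

lemma trivial_ring_right_polynomial:
  assumes "(1::'a::ring_1) = 0" "0 \<in> D"
  shows "right_polynomial D (x :: nat \<Rightarrow> 'a) n"
proof -
  have all_zero: "a = 0" for a :: 'a
    by (metis assms(1) mult_1_right mult_zero_right)
  have "(\<lambda>_. 0) \<in> coeff_fams D n"
    using assms(2) by (simp add: coeff_fams_def)
  then show ?thesis
    unfolding right_polynomial_def using all_zero by (metis ext)
qed

lemma trivial_ring_automorphism_on:
  assumes "(1::'a::ring_1) = 0" "0 \<in> D"
  shows "ring_automorphism_on D (\<sigma> :: 'a \<Rightarrow> 'a)"
proof -
  have all_eq: "a = b" for a b :: 'a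
    by (metis assms(1) mult_1_right mult_zero_right)
  then have "D = {0}"
    using assms(2) by blast
  then show ?thesis
    unfolding ring_automorphism_on_def bij_betw_def inj_on_def by (blast intro: all_eq)
qed

theorem mainTheorem12:
  fixes D :: "'a::ring_1 set" and x :: "nat \<Rightarrow> 'a" and n :: nat
    and le :: "(nat \<Rightarrow> nat) \<Rightarrow> (nat \<Rightarrow> nat) \<Rightarrow> bool"
  assumes "left_PBW D x n le"
  shows "right_polynomial D x n \<longleftrightarrow> (\<forall>i<n. ring_automorphism_on D (twist D x n i))"
proof (cases "(1::'a) = 0")
  case True
  moreover have "0 \<in> D"
    using assms unfolding left_PBW_def division_subring_def by blast
  ultimately show ?thesis
    using trivial_ring_right_polynomial trivial_ring_automorphism_on by blast
next
  case False
  then interpret left_PBW_ring D x n le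
    using assms by unfold_locales
  show ?thesis
    using right_polynomial_iff_twists_surj twist_automorphism_iff_surj by auto
qed

end
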